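(* Let $\gamma\in\mathbb C$, $k\in\{1,\dots,n\}$, and $H_k(\gamma)=I-\gamma D^k$. Then $$K_h(H_k(\gamma))=\Bigl(\frac{|\gamma|\,n!}{(n-k)!}\Bigr)^{1/k}.$$
   Context: Let $n\ge1$ and $\mathcal P_n$ the complex vector space of polynomials in one complex variable of degree at most $n$; $D$ is differentiation and $I$ the identity on $\mathcal P_n$. For nonzero $f$, $Z(f)$ is the multiset of roots of $f$ (with multiplicity; empty for nonzero constants); $Z(0)=\mathbb C$. For finite nonempty $A,B\subset\mathbb C$, $d_h(A,B)=\max_{y\in B}\min_{x\in A}|x-y|$, with conventions $d_h(\emptyset,\emptyset)=0$, $d_h(A,\emptyset)=d_h(\emptyset,A)=+\infty$ for $A\ne\emptyset$, and $d_h(A,B)=0$ if one of $A,B$ equals $\mathbb C$ and the other is nonempty. $K_h(T)=\sup_{f\in\mathcal P_n}d_h(Z(f),Z(Tf))$. *)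

theory Defs
  imports "HOL-Computational_Algebra.Polynomial" "HOL-Library.Extended_Real"
begin

text \<open>Zero set of a polynomial (as a set; multiplicities do not affect the distance).
  Z(0) = the whole complex plane; nonzero constants have empty zero set.\<close>
definition Zset :: "complex poly \<Rightarrow> complex set" where
  "Zset f = (if f = 0 then UNIV else {z. poly f z = 0})"

definition d_h :: "complex set \<Rightarrow> complex set \<Rightarrow> ereal" where
  "d_h A B =
     (if A = {} \<and> B = {} then 0
      else if A = {} \<or> B = {} then \<infinity>
      else if A = UNIV \<or> B = UNIV then 0
      else ereal (Max ((\<lambda>y. Min ((\<lambda>x. cmod (x - y)) ` A)) ` B)))"

definition K_h :: "nat \<Rightarrow> (complex poly \<Rightarrow> complex poly) \<Rightarrow> ereal" where
  "K_h n T = (SUP f \<in> {f :: complex poly. degree f \<le> n}. d_h (Zset f) (Zset (T f)))"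

definition H :: "nat \<Rightarrow> complex \<Rightarrow> complex poly \<Rightarrow> complex poly" where
  "H k \<gamma> f = f - smult \<gamma> ((pderiv ^^ k) f)"

end

theory Submission
  imports Defs "HOL-Computational_Algebra.Fundamental_Theorem_Algebra"
begin

(*
  Let y be a zero of f - gamma f^(k) with f(y) ~= 0, and let r be the distance from y to the
  nearest zero of f. Writing f(y + z) = c * prod (z - a_i) with |a_i| >= r and expanding the
  product, the k-th Taylor coefficient at y satisfies |f^(k)(y)| / k! <= (deg f choose k) |f(y)| / r^k.
  Together with f(y) = gamma f^(k)(y) this gives r^k <= |gamma| n! / (n - k)!.
  Equality is attained by f = z^n: H_k(gamma) z^n = z^(n-k) (z^k - gamma n! / (n - k)!) vanishes on
  a circle of exactly that radius around 0, the only zero of z^n.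
*)

lemma norm_coeff_prod_linear_factors_le:
  fixes A :: "'a :: real_normed_field multiset"
  assumes "\<forall>a\<in>#A. r \<le> norm a" and "0 \<le> r"
  shows "norm (coeff (\<Prod>a\<in>#A. [:-a, 1:]) i) * r ^ i
           \<le> of_nat (size A choose i) * norm (coeff (\<Prod>a\<in>#A. [:-a, 1:]) 0)"
  using assms(1)
proof (induction A arbitrary: i)
  case empty
  then show ?case by (cases i) auto
next
  case (add a A)
  define P where "P = (\<Prod>a\<in>#A. [:-a, 1:])"
  have IH: "norm (coeff P j) * r ^ j \<le> of_nat (size A choose j) * norm (coeff P 0)" for j
    using add by (simp add: P_def)
  have ra: "r \<le> norm a" using add.prems by simp
  have prod_eq: "(\<Prod>a\<in>#add_mset a A. [:-a, 1:]) = smult (-a) P + pCons 0 P"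
    by (simp add: P_def mult_pCons_left)
  show ?case
  proof (cases i)
    case 0
    then show ?thesis by simp
  next
    case (Suc j)
    have "norm (coeff (smult (-a) P + pCons 0 P) i) * r ^ i
          \<le> (norm a * norm (coeff P i) + norm (coeff P j)) * r ^ i"
      using Suc \<open>0 \<le> r\<close> norm_triangle_ineq[of "- a * coeff P i" "coeff P j"]
      by (intro mult_right_mono) (auto simp: norm_mult)
    also have "\<dots> = norm a * (norm (coeff P i) * r ^ i) + (norm (coeff P j) * r ^ j) * r"
      using Suc by (simp add: algebra_simps)
    also have "\<dots> \<le> norm a * (of_nat (size A choose i) * norm (coeff P 0))
                     + (of_nat (size A choose j) * norm (coeff P 0)) * norm a"
      by (intro add_mono mult_left_mono mult_mono IH ra) (auto simp: \<open>0 \<le> r\<close>)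
    also have "\<dots> = of_nat (size (add_mset a A) choose i) * norm (coeff (smult (-a) P + pCons 0 P) 0)"
      using Suc by (simp add: norm_mult algebra_simps)
    finally show ?thesis unfolding prod_eq .
  qed
qed

lemma norm_coeff_le_by_roots:
  fixes p :: "complex poly"
  assumes "0 \<le> r" and "\<And>z. poly p z = 0 \<Longrightarrow> r \<le> cmod z"
  shows "cmod (coeff p i) * r ^ i \<le> of_nat (degree p choose i) * cmod (coeff p 0)"
proof -
  define P where "P = (\<Prod>a\<in>#proots p. [:-a, 1:])"
  have p_eq: "p = smult (lead_coeff p) P"
    using complex_poly_decompose_multiset[of p] by (simp add: P_def)
  have "\<forall>a\<in>#proots p. r \<le> cmod a"
    using assms(2) by (cases "p = 0") auto
  from norm_coeff_prod_linear_factors_le[OF this \<open>0 \<le> r\<close>, of i]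
  have "cmod (coeff P i) * r ^ i \<le> of_nat (degree p choose i) * cmod (coeff P 0)"
    by (simp add: P_def size_proots_complex)
  then have "cmod (lead_coeff p) * (cmod (coeff P i) * r ^ i)
             \<le> cmod (lead_coeff p) * (of_nat (degree p choose i) * cmod (coeff P 0))"
    by (rule mult_left_mono) simp
  then show ?thesis
    by (subst (1 2) p_eq) (simp add: norm_mult mult_ac)
qed

lemma complex_poly_roots_empty_iff:
  fixes p :: "complex poly"
  assumes "p \<noteq> 0"
  shows "{z. poly p z = 0} = {} \<longleftrightarrow> degree p = 0"
  using assms fundamental_theorem_of_algebra[of p] constant_degree[of p]
  by (auto elim!: degree_eq_zeroE)

lemma higher_pderiv_pcompose_shift:
  "(pderiv ^^ k) (p \<circ>\<^sub>p [:w, 1:]) = (pderiv ^^ k) p \<circ>\<^sub>p [:w, 1:]"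
  by (induction k) (simp_all add: pderiv_pcompose pderiv_pCons)

lemma poly_higher_pderiv_conv_coeff_pcompose:
  "poly ((pderiv ^^ k) p) w = fact k * coeff (p \<circ>\<^sub>p [:w, 1:]) k"
proof -
  have "poly ((pderiv ^^ k) p) w = coeff ((pderiv ^^ k) (p \<circ>\<^sub>p [:w, 1:])) 0"
    by (simp add: higher_pderiv_pcompose_shift poly_pcompose flip: poly_0_coeff_0)
  also have "\<dots> = fact k * coeff (p \<circ>\<^sub>p [:w, 1:]) k"
    by (simp add: coeff_higher_pderiv pochhammer_fact)
  finally show ?thesis .
qed

lemma higher_pderiv_monom_one:
  assumes "k \<le> n"
  shows "(pderiv ^^ k) (monom (1 :: 'a :: field_char_0) n) = monom (fact n / fact (n - k)) (n - k)"
proof -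
  have "fact n = (fact (n - k) * pochhammer (of_nat (Suc (n - k))) k :: 'a)"
    using pochhammer_product'[of "1::'a" "n - k" k] assms by (simp add: pochhammer_fact add.commute)
  then show ?thesis
    using assms by (intro poly_eqI) (auto simp: coeff_higher_pderiv field_simps)
qed

lemma root_free_radius_pow_le:
  fixes f :: "complex poly"
  assumes eq: "poly f w = \<gamma> * poly ((pderiv ^^ k) f) w" and fw: "poly f w \<noteq> 0"
    and "0 \<le> r" and far: "\<And>x. poly f x = 0 \<Longrightarrow> r \<le> cmod (x - w)"
  shows "r ^ k \<le> cmod \<gamma> * (of_nat (degree f choose k) * fact k)"
proof -
  define g where "g = f \<circ>\<^sub>p [:w, 1:]"
  have poly_g: "poly g z = poly f (w + z)" for z
    by (simp add: g_def poly_pcompose)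
  have "cmod (coeff g k) * r ^ k \<le> of_nat (degree g choose k) * cmod (coeff g 0)"
    by (rule norm_coeff_le_by_roots[OF \<open>0 \<le> r\<close>]) (use far in \<open>force simp: poly_g\<close>)
  moreover have "degree g = degree f"
    by (simp add: g_def degree_pcompose)
  moreover have "coeff g 0 = \<gamma> * (fact k * coeff g k)"
    using eq by (simp add: poly_higher_pderiv_conv_coeff_pcompose g_def poly_pcompose flip: poly_0_coeff_0)
  moreover have "coeff g k \<noteq> 0"
    using eq fw by (auto simp: poly_higher_pderiv_conv_coeff_pcompose g_def)
  ultimately show ?thesis
    by (simp add: norm_mult mult_ac)
qed

lemma d_h_finite:
  fixes A B :: "complex set"
  assumes "finite A" "A \<noteq> {}" "finite B" "B \<noteq> {}"
  shows "d_h A B = ereal (Max ((\<lambda>y. Min ((\<lambda>x. cmod (x - y)) ` A)) ` B))"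
proof -
  have "A \<noteq> UNIV" "B \<noteq> UNIV"
    using assms infinite_UNIV_char_0 by auto
  then show ?thesis
    using assms by (simp add: d_h_def)
qed

lemma d_h_le_ereal_iff:
  fixes A B :: "complex set"
  assumes "finite A" "A \<noteq> {}" "finite B" "B \<noteq> {}"
  shows "d_h A B \<le> ereal R \<longleftrightarrow> (\<forall>y\<in>B. \<exists>x\<in>A. cmod (x - y) \<le> R)"
  using assms by (simp add: d_h_finite Min_le_iff)

lemma ereal_le_d_h_iff:
  fixes A B :: "complex set"
  assumes "finite A" "A \<noteq> {}" "finite B" "B \<noteq> {}"
  shows "ereal R \<le> d_h A B \<longleftrightarrow> (\<exists>y\<in>B. \<forall>x\<in>A. R \<le> cmod (x - y))"
  using assms by (simp add: d_h_finite Max_ge_iff)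

lemma coeff_H_degree:
  assumes "1 \<le> k"
  shows "coeff (H k \<gamma> f) (degree f) = lead_coeff f"
  using assms by (simp add: H_def coeff_higher_pderiv coeff_eq_0)

lemma degree_H:
  assumes "1 \<le> k"
  shows "degree (H k \<gamma> f) = degree f"
proof (rule antisym)
  show "degree (H k \<gamma> f) \<le> degree f"
    unfolding H_def
    by (rule order.trans[OF degree_diff_le_max])
       (auto simp: degree_higher_pderiv intro: order.trans[OF degree_smult_le])
  show "degree f \<le> degree (H k \<gamma> f)"
    using coeff_H_degree[OF assms] by (cases "f = 0") (auto intro: le_degree)
qed

lemma H_eq_0_iff:
  assumes "1 \<le> k"
  shows "H k \<gamma> f = 0 \<longleftrightarrow> f = 0"
proof
  assume "H k \<gamma> f = 0"
  then show "f = 0"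
    using coeff_H_degree[OF assms, of \<gamma> f] by simp
qed (simp add: H_def)

lemma H_root_near_root:
  assumes "1 \<le> k" and "f \<noteq> 0" and "poly (H k \<gamma> f) y = 0"
  shows "\<exists>x. poly f x = 0 \<and> cmod (x - y) ^ k \<le> cmod \<gamma> * (of_nat (degree f choose k) * fact k)"
proof (cases "poly f y = 0")
  case True
  then show ?thesis using \<open>1 \<le> k\<close> by (intro exI[of _ y]) (simp add: power_0_left)
next
  case False
  have eq: "poly f y = \<gamma> * poly ((pderiv ^^ k) f) y"
    using assms(3) by (simp add: H_def)
  define S where "S = {x. poly f x = 0}"
  have "finite S"
    using poly_roots_finite[OF \<open>f \<noteq> 0\<close>] by (simp add: S_def)
  have "degree f \<noteq> 0"
  proof
    assume "degree f = 0"
    then have "pderiv f = 0"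
      by (simp add: pderiv_eq_0_iff)
    then have "(pderiv ^^ k) f = 0"
      using \<open>1 \<le> k\<close> by (cases k) (simp_all add: funpow_Suc_right del: funpow.simps)
    then show False using eq False by simp
  qed
  then have "S \<noteq> {}"
    using complex_poly_roots_empty_iff[OF \<open>f \<noteq> 0\<close>] by (simp add: S_def)
  then obtain x where "x \<in> S" and x_min: "Min ((\<lambda>z. cmod (z - y)) ` S) = cmod (x - y)"
    using obtains_MIN[OF \<open>finite S\<close>] by metis
  have "cmod (x - y) \<le> cmod (z - y)" if "poly f z = 0" for z
    using \<open>finite S\<close> that by (auto simp: S_def simp flip: x_min)
  with root_free_radius_pow_le[OF eq False]
  have "cmod (x - y) ^ k \<le> cmod \<gamma> * (of_nat (degree f choose k) * fact k)"
    by simp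
  then show ?thesis using \<open>x \<in> S\<close> by (auto simp: S_def)
qed

lemma d_h_H_le:
  assumes "1 \<le> k" and "k \<le> n" and "degree f \<le> n"
  shows "d_h (Zset f) (Zset (H k \<gamma> f)) \<le> ereal (root k (cmod \<gamma> * fact n / fact (n - k)))"
    (is "_ \<le> ereal ?R")
proof (cases "f = 0")
  case True
  then show ?thesis
    using \<open>1 \<le> k\<close> by (simp add: H_def Zset_def d_h_def)
next
  case f_nonzero: False
  then have Hf: "H k \<gamma> f \<noteq> 0" "degree (H k \<gamma> f) = degree f"
    using H_eq_0_iff degree_H \<open>1 \<le> k\<close> by auto
  let ?Zf = "{z. poly f z = 0}" and ?ZHf = "{z. poly (H k \<gamma> f) z = 0}"
  have finite: "finite ?Zf" "finite ?ZHf"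
    using f_nonzero Hf by (simp_all add: poly_roots_finite)
  show ?thesis
  proof (cases "degree f = 0")
    case True
    then have "?Zf = {}" "?ZHf = {}"
      using f_nonzero Hf complex_poly_roots_empty_iff by simp_all
    then show ?thesis
      using f_nonzero Hf \<open>1 \<le> k\<close> by (simp add: Zset_def d_h_def)
  next
    case False
    then have nonempty: "?Zf \<noteq> {}" "?ZHf \<noteq> {}"
      using f_nonzero Hf complex_poly_roots_empty_iff by simp_all
    have "\<exists>x\<in>?Zf. cmod (x - y) \<le> ?R" if "y \<in> ?ZHf" for y
    proof -
      obtain x where "poly f x = 0"
        and x_close: "cmod (x - y) ^ k \<le> cmod \<gamma> * (of_nat (degree f choose k) * fact k)"
        using H_root_near_root[OF \<open>1 \<le> k\<close> f_nonzero] \<open>y \<in> ?ZHf\<close> by blast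
      note x_close
      also have "\<dots> \<le> cmod \<gamma> * (of_nat (n choose k) * fact k)"
        using \<open>degree f \<le> n\<close> by (intro mult_left_mono mult_right_mono) (auto simp: binomial_right_mono)
      also have "\<dots> = cmod \<gamma> * fact n / fact (n - k)"
        using \<open>k \<le> n\<close> fact_binomial[of k n, where 'a = real] by (simp add: mult_ac)
      finally have "root k (cmod (x - y) ^ k) \<le> ?R"
        using \<open>1 \<le> k\<close> by simp
      then show ?thesis
        using \<open>poly f x = 0\<close> \<open>1 \<le> k\<close> by (auto simp: real_root_power_cancel)
    qed
    then show ?thesis
      using f_nonzero Hf finite nonempty by (simp add: Zset_def d_h_le_ereal_iff)
  qed
qed

lemma ereal_le_d_h_H_monom:
  assumes "1 \<le> k" and "k \<le> n"
  shows "ereal (root k (cmod \<gamma> * fact n / fact (n - k)))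
           \<le> d_h (Zset (monom 1 n)) (Zset (H k \<gamma> (monom 1 n)))"
proof -
  define c :: complex where "c = \<gamma> * (fact n / fact (n - k))"
  define w where "w = rcis (root k (cmod c)) (Arg c / k)"
  have "w ^ k = c"
    using \<open>1 \<le> k\<close> by (simp add: w_def DeMoivre2 rcis_cmod_Arg)
  moreover have "w ^ n = w ^ (n - k) * w ^ k"
    using \<open>k \<le> n\<close> by (simp flip: power_add)
  ultimately have "poly (H k \<gamma> (monom 1 n)) w = 0"
    using \<open>k \<le> n\<close> by (simp add: H_def higher_pderiv_monom_one poly_monom c_def)
  moreover have "cmod w = root k (cmod \<gamma> * fact n / fact (n - k))"
    by (simp add: w_def c_def norm_mult norm_divide real_root_ge_zero)
  moreover have "monom 1 n \<noteq> (0 :: complex poly)" "H k \<gamma> (monom 1 n) \<noteq> 0"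
    using H_eq_0_iff \<open>1 \<le> k\<close> by simp_all
  moreover have "{z. poly (monom 1 n) z = 0} = {0 :: complex}"
    using assms by (auto simp: poly_monom)
  ultimately show ?thesis
    by (subst ereal_le_d_h_iff) (auto simp: Zset_def poly_roots_finite)
qed

theorem mainTheorem16:
  fixes n k :: nat and \<gamma> :: complex
  assumes "1 \<le> n" and "1 \<le> k" and "k \<le> n"
  shows "K_h n (H k \<gamma>) = ereal (root k (cmod \<gamma> * fact n / fact (n - k)))"
proof (rule antisym)
  show "K_h n (H k \<gamma>) \<le> ereal (root k (cmod \<gamma> * fact n / fact (n - k)))"
    unfolding K_h_def using assms by (intro SUP_least d_h_H_le) auto
  have "degree (monom (1 :: complex) n) \<le> n"
    by (simp add: degree_monom_eq)
  then have "d_h (Zset (monom 1 n)) (Zset (H k \<gamma> (monom 1 n))) \<le> K_h n (H k \<gamma>)"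
    unfolding K_h_def by (intro SUP_upper) simp
  with ereal_le_d_h_H_monom[OF assms(2,3)]
  show "ereal (root k (cmod \<gamma> * fact n / fact (n - k))) \<le> K_h n (H k \<gamma>)"
    by (rule order.trans)
qed

end
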